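(* Let $(L,\le,(\sqsubseteq_\alpha)_{\alpha<\kappa})$ be a model of Axioms 1–4. Then $(L,\sqsubseteq)$ is a complete lattice. More precisely, $\perp\sqsubseteq x$ for every $x\in L$, and every nonempty subset of $L$ has a least upper bound with respect to $\sqsubseteq$.
   Context: Setting (model of Axioms 1–4). Let $(L,\le)$ be a complete lattice with join operation $\bigvee$ and least element $\perp$. Let $\kappa>0$ be an ordinal, and for each ordinal $\alpha<\kappa$ let $\sqsubseteq_\alpha$ be a preorder (reflexive and transitive relation) on $L$. Derived relations: - $x=_\alpha y$ means $x\sqsubseteq_\alpha y$ and $y\sqsubseteq_\alpha x$. - $x\sqsubset_\alpha y$ means $x\sqsubseteq_\alpha y$ and not $x=_\alpha y$. - $\sqsubset=\bigcup_{\alpha<\kappa}\sqsubset_\alpha$. - $x\sqsubseteq y$ means $x\sqsubset y$ or $x=y$. Derived sets, for $x\in L$ and $\alpha<\kappa$: - $(x]_\alpha=\{y\in L:\forall\beta<\alpha,\ x=_\beta y\}$. - $[x]_\alpha=\{y\in L: x=_\alpha y\}$. For a set $X$, $X\sqsubseteq_\alpha y$ means $x\sqsubseteq_\alpha y$ for all $x\in X$. The structure is a model of Axioms 1–4 if: - (A1) for all $\alpha<\beta<\kappa$, $x\sqsubseteq_\beta y$ implies $x=_\alpha y$; - (A2) $\bigcap_{\alpha<\kappa}=_\alpha$ is the identity relation on $L$; - (A3) for every $x\in L$, every $\alpha<\kappa$ and every $X\subseteq(x]_\alpha$ there is $y\in(x]_\alpha$ with $X\sqsubseteq_\alpha y$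 such that for all $z\in(x]_\alpha$ with $X\sqsubseteq_\alpha z$ we have $y\sqsubseteq_\alpha z$ and $y\le z$; - (A4) for every nonempty $X\subseteq L$, every $\alpha<\kappa$ and every $y\in L$, if $y=_\alpha x$ for all $x\in X$ then $y=_\alpha\bigvee X$. *)

theory Defs
  imports Main
begin

text \<open>The lattice L is the whole type 'a (a complete lattice with order le, join Sup, least
element bot). The ordinal kappa is represented by a nonempty set K of a well-ordered type 'k
(any well-ordered set is order-isomorphic to an ordinal and conversely); "alpha < kappa" becomes
"alpha in K". The family of preorders is R :: 'k => 'a => 'a => bool, R a x y meaning
x is below y in the alpha-th preorder.\<close>

definition eqa :: "('k \<Rightarrow> 'a \<Rightarrow> 'a \<Rightarrow> bool) \<Rightarrow> 'k \<Rightarrow> 'a \<Rightarrow> 'a \<Rightarrow> bool" where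
  "eqa R a x y \<longleftrightarrow> R a x y \<and> R a y x"

definition lta :: "('k \<Rightarrow> 'a \<Rightarrow> 'a \<Rightarrow> bool) \<Rightarrow> 'k \<Rightarrow> 'a \<Rightarrow> 'a \<Rightarrow> bool" where
  "lta R a x y \<longleftrightarrow> R a x y \<and> \<not> eqa R a x y"

definition sqlt :: "'k set \<Rightarrow> ('k \<Rightarrow> 'a \<Rightarrow> 'a \<Rightarrow> bool) \<Rightarrow> 'a \<Rightarrow> 'a \<Rightarrow> bool" where
  "sqlt K R x y \<longleftrightarrow> (\<exists>a\<in>K. lta R a x y)"

definition sqle :: "'k set \<Rightarrow> ('k \<Rightarrow> 'a \<Rightarrow> 'a \<Rightarrow> bool) \<Rightarrow> 'a \<Rightarrow> 'a \<Rightarrow> bool" where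
  "sqle K R x y \<longleftrightarrow> sqlt K R x y \<or> x = y"

definition downcls :: "'k::order set \<Rightarrow> ('k \<Rightarrow> 'a \<Rightarrow> 'a \<Rightarrow> bool) \<Rightarrow> 'k \<Rightarrow> 'a \<Rightarrow> 'a set" where
  "downcls K R a x = {y. \<forall>b\<in>K. b < a \<longrightarrow> eqa R b x y}"

definition eqcls :: "('k \<Rightarrow> 'a \<Rightarrow> 'a \<Rightarrow> bool) \<Rightarrow> 'k \<Rightarrow> 'a \<Rightarrow> 'a set" where
  "eqcls R a x = {y. eqa R a x y}"

definition model_axioms :: "'k::wellorder set \<Rightarrow> ('k \<Rightarrow> 'a::complete_lattice \<Rightarrow> 'a \<Rightarrow> bool) \<Rightarrow> bool" where
  "model_axioms K R \<longleftrightarrow>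
     K \<noteq> {} \<and>
     (\<forall>a\<in>K. (\<forall>x. R a x x) \<and> (\<forall>x y z. R a x y \<longrightarrow> R a y z \<longrightarrow> R a x z)) \<and>
     \<comment> \<open>A1\<close>
     (\<forall>a\<in>K. \<forall>b\<in>K. a < b \<longrightarrow> (\<forall>x y. R b x y \<longrightarrow> eqa R a x y)) \<and>
     \<comment> \<open>A2\<close>
     (\<forall>x y. (\<forall>a\<in>K. eqa R a x y) \<longrightarrow> x = y) \<and>
     \<comment> \<open>A3\<close>
     (\<forall>x. \<forall>a\<in>K. \<forall>X. X \<subseteq> downcls K R a x \<longrightarrow>
        (\<exists>y\<in>downcls K R a x. (\<forall>u\<in>X. R a u y) \<and>
           (\<forall>z\<in>downcls K R a x. (\<forall>u\<in>X. R a u z) \<longrightarrow> R a y z \<and> y \<le> z))) \<and>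
     \<comment> \<open>A4\<close>
     (\<forall>X. \<forall>a\<in>K. \<forall>y. X \<noteq> {} \<longrightarrow> (\<forall>x\<in>X. eqa R a y x) \<longrightarrow> eqa R a y (Sup X))"

end

theory Submission
  imports Defs
begin

(* By A1 a strict step x <_a y turns into an equivalence x =_b y at every
   level b < a, so two strict steps compose at the smaller of their levels; this gives
   transitivity, and antisymmetry follows since no x <_a x holds.  For bot we use A3 with the
   empty set: the lattice-least element of a class (x]_a is also least for the preorder at a.

   We filter a set X level by level: surv_upto X a keeps the
   elements that are maximal, at every level b \<le> a, among the elements of X agreeing with them
   below b.  These stages decrease and are =_a-classes.  A3 and A4 yield an element following
   all nonempty stages (branch_through_stages).  If every stage is nonempty this element is the
   lub; otherwise at the first empty stage l we take the A3-lub of the elements surviving below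
   l.  Both cases use the same two facts: an element following and dominating all stages is an
   upper bound (follows_upper_bound), and below any other upper bound z at every level whose
   stage is nonempty (follows_below_upper_bound). *)

lemma Sup_image_tail:
  fixes s :: "'i::linorder \<Rightarrow> 'b::complete_lattice"
  assumes b0: "b0 \<in> J" and mono: "\<And>b c. b \<in> J \<Longrightarrow> c \<in> J \<Longrightarrow> b < c \<Longrightarrow> s b \<le> s c"
  shows "Sup (s ` J) = Sup (s ` {b\<in>J. b0 \<le> b})"
proof (rule order.antisym)
  show "Sup (s ` J) \<le> Sup (s ` {b\<in>J. b0 \<le> b})"
  proof (rule Sup_least)
    fix y assume "y \<in> s ` J"
    then obtain b where b: "b \<in> J" "y = s b" by blast
    have upper: "s b0 \<le> Sup (s ` {b\<in>J. b0 \<le> b})" using b0 by (auto intro: Sup_upper)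
    show "y \<le> Sup (s ` {b\<in>J. b0 \<le> b})"
    proof (cases "b0 \<le> b")
      case True
      then show ?thesis using b by (auto intro: Sup_upper)
    next
      case False
      then have "s b \<le> s b0" using mono b0 b(1) by simp
      then show ?thesis using b upper order.trans by blast
    qed
  qed
qed (rule Sup_subset_mono, blast)

locale axioms_model =
  fixes K :: "'k::wellorder set" and R :: "'k \<Rightarrow> 'a::complete_lattice \<Rightarrow> 'a \<Rightarrow> bool"
  assumes model: "model_axioms K R"
begin

abbreviation eq_at :: "'k \<Rightarrow> 'a \<Rightarrow> 'a \<Rightarrow> bool" where
  "eq_at a \<equiv> eqa R a"

lemma preorders: "\<forall>a\<in>K. (\<forall>x. R a x x) \<and> (\<forall>x y z. R a x y \<longrightarrow> R a y z \<longrightarrow> R a x z)"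
  using model unfolding model_axioms_def by (elim conjE) assumption

lemma A1: "\<forall>a\<in>K. \<forall>b\<in>K. a < b \<longrightarrow> (\<forall>x y. R b x y \<longrightarrow> eqa R a x y)"
  using model unfolding model_axioms_def by (elim conjE) assumption

lemma A2: "\<forall>x y. (\<forall>a\<in>K. eqa R a x y) \<longrightarrow> x = y"
  using model unfolding model_axioms_def by (elim conjE) assumption

lemma A3: "\<forall>x. \<forall>a\<in>K. \<forall>X. X \<subseteq> downcls K R a x \<longrightarrow>
    (\<exists>y\<in>downcls K R a x. (\<forall>u\<in>X. R a u y) \<and>
       (\<forall>z\<in>downcls K R a x. (\<forall>u\<in>X. R a u z) \<longrightarrow> R a y z \<and> y \<le> z))"
  using model unfolding model_axioms_def by (elim conjE) assumption

lemma A4: "\<forall>X. \<forall>a\<in>K. \<forall>y. X \<noteq> {} \<longrightarrow> (\<forall>x\<in>X. eqa R a y x) \<longrightarrow> eqa R a y (Sup X)"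
  using model unfolding model_axioms_def by (elim conjE) assumption

lemma R_refl: "a \<in> K \<Longrightarrow> R a x x"
  using preorders by blast

lemma R_trans: "a \<in> K \<Longrightarrow> R a x y \<Longrightarrow> R a y z \<Longrightarrow> R a x z"
  using preorders by blast

lemma coarser_level_eq: "a \<in> K \<Longrightarrow> b \<in> K \<Longrightarrow> a < b \<Longrightarrow> R b x y \<Longrightarrow> eq_at a x y"
  using A1 by blast

lemma levels_separate: "(\<forall>a\<in>K. eq_at a x y) \<Longrightarrow> x = y"
  using A2 by blast

lemma eq_at_Sup: "a \<in> K \<Longrightarrow> X \<noteq> {} \<Longrightarrow> \<forall>x\<in>X. eq_at a y x \<Longrightarrow> eq_at a y (Sup X)"
  using A4 by blast

lemma eq_refl: "a \<in> K \<Longrightarrow> eq_at a x x"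
  by (simp add: eqa_def R_refl)

lemma eq_sym: "eq_at a x y \<Longrightarrow> eq_at a y x"
  by (simp add: eqa_def)

lemma eq_trans: "a \<in> K \<Longrightarrow> eq_at a x y \<Longrightarrow> eq_at a y z \<Longrightarrow> eq_at a x z"
  unfolding eqa_def using R_trans by blast

lemma eq_RD: "eq_at a x y \<Longrightarrow> R a x y" "eq_at a x y \<Longrightarrow> R a y x"
  by (simp_all add: eqa_def)

definition agree_below :: "'k \<Rightarrow> 'a \<Rightarrow> 'a \<Rightarrow> bool" where
  "agree_below a x y \<longleftrightarrow> (\<forall>b\<in>K. b < a \<longrightarrow> eq_at b x y)"

lemma downcls_iff: "y \<in> downcls K R a x \<longleftrightarrow> agree_below a x y"
  by (simp add: downcls_def agree_below_def)

lemma agree_sym: "agree_below a x y \<Longrightarrow> agree_below a y x"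
  by (simp add: agree_below_def eq_sym)

lemma agree_trans: "agree_below a x y \<Longrightarrow> agree_below a y z \<Longrightarrow> agree_below a x z"
  unfolding agree_below_def using eq_trans by blast

lemma agree_refl: "agree_below a x x"
  by (simp add: agree_below_def eq_refl)

lemma agree_mono: "agree_below a x y \<Longrightarrow> b \<le> a \<Longrightarrow> agree_below b x y"
  unfolding agree_below_def by auto

lemma agree_eq: "agree_below a x y \<Longrightarrow> b \<in> K \<Longrightarrow> b < a \<Longrightarrow> eq_at b x y"
  unfolding agree_below_def by auto

definition level_lub :: "'k \<Rightarrow> 'a \<Rightarrow> 'a set \<Rightarrow> 'a \<Rightarrow> bool" where
  "level_lub a x X y \<longleftrightarrow> agree_below a x y \<and> (\<forall>u\<in>X. R a u y) \<and>
     (\<forall>z. agree_below a x z \<longrightarrow> (\<forall>u\<in>X. R a u z) \<longrightarrow> R a y z \<and> y \<le> z)"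

lemma level_lub_exists:
  assumes "a \<in> K" and "\<forall>u\<in>X. agree_below a x u"
  shows "\<exists>y. level_lub a x X y"
proof -
  have "X \<subseteq> downcls K R a x" using assms(2) downcls_iff by blast
  then have "\<exists>y\<in>downcls K R a x. (\<forall>u\<in>X. R a u y) \<and>
      (\<forall>z\<in>downcls K R a x. (\<forall>u\<in>X. R a u z) \<longrightarrow> R a y z \<and> y \<le> z)"
    using A3 assms(1) by blast
  then show ?thesis unfolding level_lub_def Bex_def Ball_def downcls_iff by blast
qed

text \<open>If m is lattice-least in its class (m]_a, then it is also least for the preorder at a:
  compare m with the A3-lub of the empty set.\<close>

lemma lattice_least_is_level_least:
  assumes a: "a \<in> K" and least: "\<And>w. agree_below a m w \<Longrightarrow> m \<le> w"
    and w: "agree_below a m w"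
  shows "R a m w"
proof -
  obtain m' where m': "level_lub a m {} m'" using level_lub_exists[OF a] by blast
  have "m \<le> m'" using m' least unfolding level_lub_def by blast
  moreover have "m' \<le> m" using m' agree_refl unfolding level_lub_def by blast
  ultimately have "m' = m" by simp
  then show ?thesis using m' w unfolding level_lub_def by blast
qed

text \<open>The first level at which two distinct elements differ (it exists by A2).\<close>

definition first_diff :: "'a \<Rightarrow> 'a \<Rightarrow> 'k" where
  "first_diff x y = (LEAST a. a \<in> K \<and> \<not> eq_at a x y)"

lemma first_diff:
  assumes "x \<noteq> y"
  shows "first_diff x y \<in> K" "\<not> eq_at (first_diff x y) x y" "agree_below (first_diff x y) x y"
proof -
  have "\<exists>a. a \<in> K \<and> \<not> eq_at a x y" using levels_separate assms by blast
  then show "first_diff x y \<in> K" "\<not> eq_at (first_diff x y) x y"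
    unfolding first_diff_def by (metis (mono_tags, lifting) LeastI)+
  show "agree_below (first_diff x y) x y"
    unfolding agree_below_def first_diff_def using not_less_Least by blast
qed

lemma first_diff_le: "a \<in> K \<Longrightarrow> \<not> eq_at a x y \<Longrightarrow> first_diff x y \<le> a"
  unfolding first_diff_def by (simp add: Least_le)

lemma sqlt_intro: "a \<in> K \<Longrightarrow> R a x y \<Longrightarrow> \<not> eq_at a x y \<Longrightarrow> sqlt K R x y"
  unfolding sqlt_def lta_def by blast

lemma sqlt_at_first_diff: "x \<noteq> y \<Longrightarrow> R (first_diff x y) x y \<Longrightarrow> sqlt K R x y"
  using first_diff sqlt_intro by blast

text \<open>If x \<sqsubseteq> z and both agree below a, then x is below z at level a: a strict step
  at a level above a would make them equal at a (A1), one below a is excluded.\<close>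

lemma sqle_at_level:
  assumes s: "sqle K R x z" and a: "a \<in> K" and agree: "agree_below a x z"
  shows "R a x z"
proof (cases "x = z")
  case True
  then show ?thesis using a R_refl by simp
next
  case False
  then obtain b where b: "b \<in> K" "R b x z" "\<not> eq_at b x z"
    using s unfolding sqle_def sqlt_def lta_def by blast
  have "\<not> b < a" using agree b unfolding agree_below_def by blast
  then have "b = a \<or> a < b" by fastforce
  then show ?thesis using b coarser_level_eq[OF a b(1)] eq_RD by blast
qed

lemma lta_eq_trans: "a \<in> K \<Longrightarrow> lta R a x y \<Longrightarrow> eq_at a y z \<Longrightarrow> lta R a x z"
  unfolding lta_def eqa_def using R_trans by blast

lemma eq_lta_trans: "a \<in> K \<Longrightarrow> eq_at a x y \<Longrightarrow> lta R a y z \<Longrightarrow> lta R a x z"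
  unfolding lta_def eqa_def using R_trans by blast

lemma lta_lta_trans: "a \<in> K \<Longrightarrow> lta R a x y \<Longrightarrow> lta R a y z \<Longrightarrow> lta R a x z"
  unfolding lta_def eqa_def using R_trans by blast

lemma sqlt_trans:
  assumes "sqlt K R x y" and "sqlt K R y z"
  shows "sqlt K R x z"
proof -
  obtain a b where a: "a \<in> K" "lta R a x y" and b: "b \<in> K" "lta R b y z"
    using assms unfolding sqlt_def by blast
  consider "a < b" | "b < a" | "a = b" by fastforce
  then show ?thesis
  proof cases
    case 1
    then have "eq_at a y z" using coarser_level_eq a(1) b unfolding lta_def by blast
    then show ?thesis using lta_eq_trans a unfolding sqlt_def by blast
  next
    case 2
    then have "eq_at b x y" using coarser_level_eq b(1) a unfolding lta_def by blast
    then show ?thesis using eq_lta_trans b unfolding sqlt_def by blast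
  next
    case 3
    then have "lta R a x z" using lta_lta_trans[OF a] b(2) by simp
    then show ?thesis using a(1) unfolding sqlt_def by blast
  qed
qed

lemma sqlt_irrefl: "\<not> sqlt K R x x"
  unfolding sqlt_def lta_def eqa_def by blast

lemma sqle_trans: "sqle K R x y \<Longrightarrow> sqle K R y z \<Longrightarrow> sqle K R x z"
  unfolding sqle_def using sqlt_trans by blast

lemma sqle_antisym: "sqle K R x y \<Longrightarrow> sqle K R y x \<Longrightarrow> x = y"
  unfolding sqle_def using sqlt_trans sqlt_irrefl by blast

text \<open>bot is \<sqsubseteq>-least: being lattice-least, it is R-least in its class at the first level
  where it differs from x.\<close>

lemma bot_sqle: "sqle K R bot x"
proof (cases "x = bot")
  case False
  then have ne: "bot \<noteq> x" by simp
  have "R (first_diff bot x) bot x"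
    using lattice_least_is_level_least first_diff(1,3)[OF ne] by simp
  then show ?thesis using sqlt_at_first_diff[OF ne] unfolding sqle_def by blast
qed (simp add: sqle_def)

definition surv_below :: "'a set \<Rightarrow> 'k \<Rightarrow> 'a set" where
  "surv_below X a = {x\<in>X. \<forall>x'\<in>X. \<forall>b\<in>K. b < a \<longrightarrow> agree_below b x' x \<longrightarrow> R b x' x}"

definition surv_upto :: "'a set \<Rightarrow> 'k \<Rightarrow> 'a set" where
  "surv_upto X a = {x\<in>X. \<forall>x'\<in>X. \<forall>b\<in>K. b \<le> a \<longrightarrow> agree_below b x' x \<longrightarrow> R b x' x}"

lemma surv_upto_below: "surv_upto X a \<subseteq> surv_below X a"
  unfolding surv_below_def surv_upto_def by auto

lemma surv_upto_antimono: "b \<le> a \<Longrightarrow> surv_upto X a \<subseteq> surv_upto X b"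
  unfolding surv_upto_def by (auto intro: order.trans)

lemma surv_below_subset: "x \<in> surv_below X a \<Longrightarrow> x \<in> X"
  unfolding surv_below_def by auto

lemma surv_below_iff: "x \<in> surv_below X a \<longleftrightarrow> x \<in> X \<and> (\<forall>b\<in>K. b < a \<longrightarrow> x \<in> surv_upto X b)"
  unfolding surv_below_def surv_upto_def using le_less_trans by blast

text \<open>All survivors below a agree below a: at the first level where two of them differ
  each would have to be below the other.\<close>

lemma surv_below_agree:
  assumes x: "x \<in> surv_below X a" and y: "y \<in> surv_below X a"
  shows "agree_below a x y"
proof (rule ccontr)
  assume "\<not> agree_below a x y"
  then obtain b where b: "b \<in> K" "b < a" "\<not> eq_at b x y" unfolding agree_below_def by auto
  then have ne: "x \<noteq> y" using eq_refl by auto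
  define d where "d = first_diff x y"
  have d: "d \<in> K" "\<not> eq_at d x y" "agree_below d x y" using first_diff[OF ne] d_def by auto
  have "d < a" using first_diff_le[OF b(1,3)] b(2) d_def by simp
  then have "R d y x" "R d x y"
    using x y surv_below_subset[OF x] surv_below_subset[OF y] d(1,3) agree_sym
    unfolding surv_below_def by blast+
  then show False using d(2) unfolding eqa_def by blast
qed

lemma surv_below_closed:
  assumes x: "x \<in> surv_below X a" and x': "x' \<in> X" and agree: "agree_below a x' x"
  shows "x' \<in> surv_below X a"
proof -
  have "R c x'' x'" if "x'' \<in> X" "c \<in> K" "c < a" "agree_below c x'' x'" for x'' c
  proof -
    have "agree_below c x'' x" using agree_mono[OF agree] that agree_trans by fastforce
    then have "R c x'' x" using x that(1-3) unfolding surv_below_def by blast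
    moreover have "eq_at c x x'" using agree_eq[OF agree_sym[OF agree] that(2,3)] .
    ultimately show ?thesis using R_trans[OF that(2)] eq_RD by blast
  qed
  then show ?thesis using x' unfolding surv_below_def by blast
qed

lemma surv_upto_if_maximal:
  assumes a: "a \<in> K" and x: "x \<in> surv_below X a" and max: "\<forall>x'\<in>surv_below X a. R a x' x"
  shows "x \<in> surv_upto X a"
proof -
  have "R b x' x" if "x' \<in> X" "b \<in> K" "b \<le> a" "agree_below b x' x" for x' b
  proof (cases "b < a")
    case True
    then show ?thesis using x that unfolding surv_below_def by blast
  next
    case False
    then have "b = a" using that(3) by simp
    then show ?thesis using surv_below_closed[OF x that(1)] that(4) max by blast
  qed
  then show ?thesis using surv_below_subset[OF x] unfolding surv_upto_def by blast
qed

lemma surv_upto_maximal: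
  assumes a: "a \<in> K" and x: "x \<in> surv_upto X a" and x': "x' \<in> surv_below X a"
  shows "R a x' x"
proof -
  have agree: "agree_below a x' x" using surv_below_agree[OF x'] surv_upto_below x by blast
  have "\<forall>u\<in>X. \<forall>b\<in>K. b \<le> a \<longrightarrow> agree_below b u x \<longrightarrow> R b u x"
    using x by (simp add: surv_upto_def)
  then have "\<forall>b\<in>K. b \<le> a \<longrightarrow> agree_below b x' x \<longrightarrow> R b x' x"
    using surv_below_subset[OF x'] by (rule bspec)
  then show ?thesis using a agree by simp
qed

lemma stage_lub_exists:
  assumes "b \<in> K" and "t \<in> surv_upto X b"
  shows "\<exists>y. level_lub b t (surv_below X b) y"
  using level_lub_exists[OF assms(1)] surv_below_agree[OF subsetD[OF surv_upto_below assms(2)]]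
  by blast

lemma stage_lub_eq:
  assumes b: "b \<in> K" and t: "t \<in> surv_upto X b" and y: "level_lub b t (surv_below X b) y"
    and t': "t' \<in> surv_upto X b"
  shows "eq_at b y t'"
proof -
  have "R b t' y" using y t' surv_upto_below unfolding level_lub_def by blast
  moreover have "agree_below b t t'" using surv_below_agree surv_upto_below t t' by blast
  then have "R b y t'" using y surv_upto_maximal[OF b t'] unfolding level_lub_def by blast
  ultimately show ?thesis unfolding eqa_def by blast
qed

lemma stage_lub_mono:
  assumes bK: "b \<in> K" and bc: "b < c"
    and t: "t \<in> surv_upto X b" and y: "level_lub b t (surv_below X b) y"
    and t': "t' \<in> surv_upto X c" and y': "level_lub c t' (surv_below X c) y'"
  shows "y \<le> y'"
proof -
  have t'b: "t' \<in> surv_upto X b" using surv_upto_antimono[OF less_imp_le[OF bc]] t' by blast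
  have t'y': "agree_below c t' y'" using y' unfolding level_lub_def by blast
  have "agree_below b t t'" using surv_below_agree surv_upto_below t t'b by blast
  moreover have "agree_below b t' y'" using agree_mono[OF t'y'] bc by simp
  ultimately have "agree_below b t y'" by (rule agree_trans)
  moreover have "\<forall>u\<in>surv_below X b. R b u y'"
    using surv_upto_maximal[OF bK t'b] agree_eq[OF t'y' bK bc] R_trans[OF bK] eq_RD by blast
  ultimately show ?thesis using y unfolding level_lub_def by blast
qed

text \<open>Key construction (A3 and A4): for a set J of levels with nonempty stages there is an
  element equivalent at every b in J to all survivors up to b, namely the Sup of the stage
  lubs; at level b only the tail of stages from b on matters, and there A4 applies.\<close>

lemma branch_through_stages:
  assumes J: "J \<subseteq> K" and ne: "\<forall>b\<in>J. surv_upto X b \<noteq> {}"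
  shows "\<exists>v. \<forall>b\<in>J. \<forall>t\<in>surv_upto X b. eq_at b v t"
proof -
  have "\<forall>b\<in>J. \<exists>t y. t \<in> surv_upto X b \<and> level_lub b t (surv_below X b) y"
    using ne J stage_lub_exists by blast
  then obtain tt s where ts: "\<And>b. b \<in> J \<Longrightarrow>
      tt b \<in> surv_upto X b \<and> level_lub b (tt b) (surv_below X b) (s b)"
    by metis
  have mono: "s b \<le> s c" if "b \<in> J" "c \<in> J" "b < c" for b c
    using stage_lub_mono that ts J by blast
  have tail: "eq_at b0 (s b0) (s b)" if b0: "b0 \<in> J" and b: "b \<in> J" "b0 \<le> b" for b0 b
  proof (cases "b0 = b")
    case False
    then have lt: "b0 < b" using b(2) by simp
    have "tt b \<in> surv_upto X b0" using surv_upto_antimono[OF b(2)] ts[OF b(1)] by blast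
    then have "eq_at b0 (s b0) (tt b)" using stage_lub_eq ts[OF b0] J b0 by blast
    moreover have "eq_at b0 (tt b) (s b)"
      using agree_eq ts[OF b(1)] J b0 lt unfolding level_lub_def by blast
    ultimately show ?thesis using eq_trans J b0 by blast
  qed (use eq_refl J b0 in blast)
  have "eq_at b0 (Sup (s ` J)) t" if b0: "b0 \<in> J" and t: "t \<in> surv_upto X b0" for b0 t
  proof -
    have b0K: "b0 \<in> K" using J b0 by blast
    have tail_ne: "s ` {b\<in>J. b0 \<le> b} \<noteq> {}" using b0 by blast
    have tail_eq: "\<forall>x\<in>s ` {b\<in>J. b0 \<le> b}. eq_at b0 (s b0) x" using tail[OF b0] by auto
    have "eq_at b0 (s b0) (Sup (s ` J))"
      using eq_at_Sup[OF b0K tail_ne tail_eq] Sup_image_tail[OF b0 mono] by simp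
    then have "eq_at b0 (Sup (s ` J)) (s b0)" by (rule eq_sym)
    moreover have "eq_at b0 (s b0) t" using stage_lub_eq[OF b0K] ts[OF b0] t by blast
    ultimately show ?thesis by (rule eq_trans[OF b0K])
  qed
  then show ?thesis by blast
qed

definition follows :: "'a set \<Rightarrow> 'a \<Rightarrow> bool" where
  "follows X y \<longleftrightarrow> (\<forall>b\<in>K. \<forall>t\<in>surv_upto X b. eq_at b y t)"

definition dominates :: "'a set \<Rightarrow> 'a \<Rightarrow> bool" where
  "dominates X y \<longleftrightarrow> (\<forall>c\<in>K. \<forall>u\<in>surv_below X c. R c u y)"

lemma follows_agree:
  "follows X y \<Longrightarrow> u \<in> surv_below X c \<Longrightarrow> agree_below c u y"
  unfolding follows_def agree_below_def using surv_below_iff eq_sym by blast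

lemma follows_dominates_at:
  assumes y: "follows X y" and c: "c \<in> K" and ne: "surv_upto X c \<noteq> {}"
    and u: "u \<in> surv_below X c"
  shows "R c u y"
proof -
  obtain t where t: "t \<in> surv_upto X c" using ne by blast
  have "eq_at c t y" using y c t eq_sym unfolding follows_def by blast
  then show ?thesis using surv_upto_maximal[OF c t u] R_trans[OF c] eq_RD by blast
qed

text \<open>An element following and dominating X is an upper bound: an x in X lies in all stages
  (then x = y by A2), or x <_c y at the first level c where x drops out.\<close>

lemma follows_upper_bound:
  assumes y: "follows X y" and dom: "dominates X y" and x: "x \<in> X"
  shows "sqle K R x y"
proof (cases "\<forall>a\<in>K. x \<in> surv_upto X a")
  case True
  then have "x = y" using y levels_separate eq_sym unfolding follows_def by blast
  then show ?thesis unfolding sqle_def by blast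
next
  case False
  define c where "c = (LEAST c. c \<in> K \<and> x \<notin> surv_upto X c)"
  have c: "c \<in> K" "x \<notin> surv_upto X c"
    using LeastI_ex[of "\<lambda>c. c \<in> K \<and> x \<notin> surv_upto X c"] False c_def by auto
  have xc: "x \<in> surv_below X c"
    using surv_below_iff x not_less_Least c_def by blast
  have Rxy: "R c x y" using dom c(1) xc unfolding dominates_def by blast
  have "\<not> eq_at c x y"
  proof
    assume "eq_at c x y"
    then have "\<forall>x'\<in>surv_below X c. R c x' x"
      using dom c(1) R_trans[OF c(1)] eq_RD unfolding dominates_def by blast
    then show False using surv_upto_if_maximal[OF c(1) xc] c(2) by blast
  qed
  then show ?thesis using sqlt_intro[OF c(1) Rxy] unfolding sqle_def by blast
qed

text \<open>An element following X is below any upper bound z, provided the stage at their first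
  difference c is nonempty: a survivor t up to c is equivalent to y at c and below z.\<close>

lemma follows_below_upper_bound:
  assumes y: "follows X y" and z: "\<forall>x\<in>X. sqle K R x z" and ne: "y \<noteq> z"
    and stage: "surv_upto X (first_diff y z) \<noteq> {}"
  shows "sqlt K R y z"
proof -
  define c where "c = first_diff y z"
  have c: "c \<in> K" "agree_below c y z" using first_diff[OF ne] c_def by auto
  obtain t where t: "t \<in> surv_upto X c" using stage c_def by blast
  have ty: "eq_at c t y" using y c(1) t eq_sym unfolding follows_def by blast
  have "agree_below c t z"
    using follows_agree[OF y] surv_upto_below t c(2) agree_trans by blast
  moreover have "sqle K R t z" using z t surv_upto_below surv_below_subset by blast
  ultimately have "R c t z" using sqle_at_level c(1) by blast
  then have "R c y z" using R_trans[OF c(1)] eq_RD(2)[OF ty] by blast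
  then show ?thesis using sqlt_at_first_diff[OF ne] c_def by simp
qed

text \<open>An A3-lub y at level l of the survivors below l, if it follows X, is below every upper
  bound z differing from it at a level c \<ge> l: it is R-below z at l, and for c > l it is
  lattice-least in its class at c, hence R-least there.\<close>

lemma stage_lub_below_upper_bound:
  assumes l: "l \<in> K" and y: "follows X y" and lub: "level_lub l v (surv_below X l) y"
    and z: "\<forall>x\<in>X. sqle K R x z" and ne: "y \<noteq> z" and lc: "l \<le> first_diff y z"
  shows "sqlt K R y z"
proof -
  define c where "c = first_diff y z"
  have c: "c \<in> K" "\<not> eq_at c y z" "agree_below c y z" using first_diff[OF ne] c_def by auto
  have vy: "agree_below l v y" using lub unfolding level_lub_def by blast
  have lub_below: "R l y w \<and> y \<le> w" if w: "agree_below l y w" "\<forall>u\<in>surv_below X l. R l u w" for w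
    using lub agree_trans[OF vy w(1)] w(2) unfolding level_lub_def by blast
  have yz: "agree_below l y z" using agree_mono[OF c(3)] lc c_def by simp
  have "R l u z" if u: "u \<in> surv_below X l" for u
  proof -
    have "agree_below l u z" using follows_agree[OF y u] yz agree_trans by blast
    then show ?thesis using sqle_at_level l z surv_below_subset[OF u] by blast
  qed
  then have Ryz: "R l y z" using lub_below yz by blast
  show ?thesis
  proof (cases "c = l")
    case True
    then show ?thesis using Ryz c sqlt_intro by blast
  next
    case False
    then have lt: "l < c" using lc c_def by simp
    have "y \<le> w" if w: "agree_below c y w" for w
    proof -
      have "\<forall>u\<in>surv_below X l. R l u w"
        using lub agree_eq[OF w l lt] R_trans[OF l] eq_RD unfolding level_lub_def by blast
      then show ?thesis using lub_below agree_mono[OF w] lt by simp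
    qed
    then have "R c y z" using lattice_least_is_level_least c(1,3) by blast
    then show ?thesis using c sqlt_intro by blast
  qed
qed

lemma lub_if_follows:
  assumes y: "follows X y" and dom: "dominates X y"
    and empty_stage: "\<And>z. \<forall>x\<in>X. sqle K R x z \<Longrightarrow> y \<noteq> z \<Longrightarrow>
      surv_upto X (first_diff y z) = {} \<Longrightarrow> sqlt K R y z"
  shows "(\<forall>x\<in>X. sqle K R x y) \<and> (\<forall>z. (\<forall>x\<in>X. sqle K R x z) \<longrightarrow> sqle K R y z)"
proof (intro conjI allI ballI impI)
  fix x assume "x \<in> X"
  then show "sqle K R x y" by (rule follows_upper_bound[OF y dom])
next
  fix z assume z: "\<forall>x\<in>X. sqle K R x z"
  show "sqle K R y z"
  proof (cases "y = z")
    case False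
    then have "sqlt K R y z"
      using follows_below_upper_bound[OF y z False] empty_stage[OF z False] by blast
    then show ?thesis unfolding sqle_def ..
  qed (simp add: sqle_def)
qed

lemma lub_at_first_empty_stage:
  assumes l: "l \<in> K" "surv_upto X l = {}" and ne: "\<forall>b\<in>K. b < l \<longrightarrow> surv_upto X b \<noteq> {}"
  obtains v y where "follows X y" "dominates X y" "level_lub l v (surv_below X l) y"
proof -
  obtain v where v: "\<forall>b\<in>{b\<in>K. b < l}. \<forall>t\<in>surv_upto X b. eq_at b v t"
    using branch_through_stages[of "{b\<in>K. b < l}" X] ne by blast
  have "\<forall>u\<in>surv_below X l. agree_below l v u"
    using v surv_below_iff unfolding agree_below_def by blast
  then obtain y where lub: "level_lub l v (surv_below X l) y" using level_lub_exists[OF l(1)] by blast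
  have empty_from_l: "surv_upto X b = {}" if "l \<le> b" for b
    using surv_upto_antimono[OF that] l(2) by blast
  have y: "follows X y" unfolding follows_def
  proof (intro ballI)
    fix b t assume b: "b \<in> K" and t: "t \<in> surv_upto X b"
    then have bl: "b < l" using empty_from_l by (metis empty_iff not_less)
    have "eq_at b y v" using lub agree_eq[OF _ b bl] eq_sym unfolding level_lub_def by blast
    then show "eq_at b y t" using v b bl t eq_trans by blast
  qed
  have dom: "dominates X y" unfolding dominates_def
  proof (intro ballI)
    fix c u assume c: "c \<in> K" and u: "u \<in> surv_below X c"
    consider "surv_upto X c \<noteq> {}" | "c = l" | "l < c" using ne c by fastforce
    then show "R c u y"
    proof cases
      case 1
      then show ?thesis using follows_dominates_at[OF y c _ u] by blast
    next
      case 2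
      then show ?thesis using lub u unfolding level_lub_def by blast
    next
      case 3
      then show ?thesis using u surv_below_iff l by blast
    qed
  qed
  show ?thesis by (rule that[OF y dom lub])
qed

text \<open>If all stages are
  nonempty, an element following them is the lub; otherwise the lub is the A3-lub at the first
  empty stage.\<close>

lemma has_lub:
  "\<exists>y. (\<forall>x\<in>X. sqle K R x y) \<and> (\<forall>z. (\<forall>x\<in>X. sqle K R x z) \<longrightarrow> sqle K R y z)"
proof (cases "\<exists>a\<in>K. surv_upto X a = {}")
  case False
  then obtain y where "\<forall>b\<in>K. \<forall>t\<in>surv_upto X b. eq_at b y t"
    using branch_through_stages[of K] by blast
  then have y: "follows X y" unfolding follows_def .
  then have dom: "dominates X y" using follows_dominates_at False unfolding dominates_def by blast
  have empty_stage: "sqlt K R y z"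
    if "\<forall>x\<in>X. sqle K R x z" "y \<noteq> z" "surv_upto X (first_diff y z) = {}" for z
    using False first_diff(1)[OF that(2)] that(3) by blast
  show ?thesis using lub_if_follows[OF y dom empty_stage] by blast
next
  case True
  define l where "l = (LEAST a. a \<in> K \<and> surv_upto X a = {})"
  have l: "l \<in> K" "surv_upto X l = {}"
    using LeastI_ex[of "\<lambda>a. a \<in> K \<and> surv_upto X a = {}"] True l_def by auto
  have ne: "\<forall>b\<in>K. b < l \<longrightarrow> surv_upto X b \<noteq> {}" using not_less_Least l_def by blast
  obtain v y where y: "follows X y" and dom: "dominates X y"
    and lub: "level_lub l v (surv_below X l) y"
    using lub_at_first_empty_stage[OF l ne] by blast
  have empty_stage: "sqlt K R y z"
    if z: "\<forall>x\<in>X. sqle K R x z" and yz: "y \<noteq> z" and empty: "surv_upto X (first_diff y z) = {}"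
    for z
  proof -
    have "l \<le> first_diff y z" using ne first_diff(1)[OF yz] empty not_le by blast
    then show ?thesis using stage_lub_below_upper_bound[OF l(1) y lub z yz] by blast
  qed
  show ?thesis using lub_if_follows[OF y dom empty_stage] by blast
qed

end

theorem mainTheorem1:
  fixes K :: "'k::wellorder set" and R :: "'k \<Rightarrow> 'a::complete_lattice \<Rightarrow> 'a \<Rightarrow> bool"
  assumes "model_axioms K R"
  shows "(\<forall>x. sqle K R x x) \<and>
         (\<forall>x y. sqle K R x y \<longrightarrow> sqle K R y x \<longrightarrow> x = y) \<and>
         (\<forall>x y z. sqle K R x y \<longrightarrow> sqle K R y z \<longrightarrow> sqle K R x z) \<and>
         (\<forall>x. sqle K R bot x) \<and>
         (\<forall>X::'a set. X \<noteq> {} \<longrightarrow>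
            (\<exists>y. (\<forall>x\<in>X. sqle K R x y) \<and>
                 (\<forall>z. (\<forall>x\<in>X. sqle K R x z) \<longrightarrow> sqle K R y z)))"
proof -
  interpret axioms_model K R by unfold_locales (rule assms)
  show ?thesis
  proof (intro conjI allI impI)
    show "sqle K R x x" for x by (simp add: sqle_def)
    show "x = y" if "sqle K R x y" "sqle K R y x" for x y using sqle_antisym that .
    show "sqle K R x z" if "sqle K R x y" "sqle K R y z" for x y z using sqle_trans that .
    show "sqle K R bot x" for x by (rule bot_sqle)
    show "\<exists>y. (\<forall>x\<in>X. sqle K R x y) \<and> (\<forall>z. (\<forall>x\<in>X. sqle K R x z) \<longrightarrow> sqle K R y z)"
      for X by (rule has_lub)
  qed
qed

end
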